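(* Let $D$ be a unique factorization domain and $D'=D_{mult}/\sim$. For every nonzero element $[m]_\sim$ of $D'$, $\tau'_{[m]_\sim}=P_{J([m]_\sim)}$, and hence the factor semigroup $D'/\tau'_{[m]_\sim}$ satisfies Condition $( * )$.
   Context: $D_{mult}$ is the multiplicative semigroup of $D$, $\sim$ the associate congruence, $[x]_\sim$ the class of $x$; $\gcd([a]_\sim,[b]_\sim)=[\gcd(a,b)]_\sim$ in $D'$. $\tau'_{[m]_\sim}$ is the relation on $D'$ with $([a]_\sim,[b]_\sim)\in\tau'_{[m]_\sim}$ iff $\gcd([a]_\sim,[m]_\sim)=\gcd([b]_\sim,[m]_\sim)$. $J([m]_\sim)$ is the ideal of $D'$ generated by $[m]_\sim$. For a semigroup $S$, $H\subseteq S$, $a\in S$: $H\dots a=\{(x,y)\in S\times S: xay\in H\}$, $P_H=\{(a,b)\in S\times S: H\dots a=H\dots b\}$. For a commutative semigroup $S$ with zero $0$, $A(s)=\{x\in S: xs=0\}$. $S$ satisfies Condition $( * )$ if: (1) $S$ is a commutative monoid with a zero; (2) $A(s)\neq\{0\}$ for every non-identity $s$; (3) $A(s)=A(t)$ implies $s=t$. *)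

theory Defs
  imports "HOL-Computational_Algebra.Computational_Algebra"
begin

text \<open>Operation induced on equivalence classes: the class of f a b for a in A, b in B.
  For a congruence r and classes A, B this is exactly the class of f a b.\<close>
definition class_op :: "('a \<times> 'a) set \<Rightarrow> ('a \<Rightarrow> 'a \<Rightarrow> 'a) \<Rightarrow> 'a set \<Rightarrow> 'a set \<Rightarrow> 'a set" where
  "class_op r f A B = (\<Union>a\<in>A. \<Union>b\<in>B. r `` {f a b})"

definition dots :: "'a set \<Rightarrow> ('a \<Rightarrow> 'a \<Rightarrow> 'a) \<Rightarrow> 'a set \<Rightarrow> 'a \<Rightarrow> ('a \<times> 'a) set" where
  "dots S f H a = {(x, y). x \<in> S \<and> y \<in> S \<and> f (f x a) y \<in> H}"

definition P_rel :: "'a set \<Rightarrow> ('a \<Rightarrow> 'a \<Rightarrow> 'a) \<Rightarrow> 'a set \<Rightarrow> ('a \<times> 'a) set" where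
  "P_rel S f H = {(a, b). a \<in> S \<and> b \<in> S \<and> dots S f H a = dots S f H b}"

definition gen_ideal :: "'a set \<Rightarrow> ('a \<Rightarrow> 'a \<Rightarrow> 'a) \<Rightarrow> 'a \<Rightarrow> 'a set" where
  "gen_ideal S f a = {a} \<union> {f x a |x. x \<in> S} \<union> {f a y |y. y \<in> S} \<union> {f (f x a) y |x y. x \<in> S \<and> y \<in> S}"

definition is_identity :: "'a set \<Rightarrow> ('a \<Rightarrow> 'a \<Rightarrow> 'a) \<Rightarrow> 'a \<Rightarrow> bool" where
  "is_identity S f e \<longleftrightarrow> e \<in> S \<and> (\<forall>x\<in>S. f e x = x \<and> f x e = x)"

definition is_zero :: "'a set \<Rightarrow> ('a \<Rightarrow> 'a \<Rightarrow> 'a) \<Rightarrow> 'a \<Rightarrow> bool" where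
  "is_zero S f z \<longleftrightarrow> z \<in> S \<and> (\<forall>x\<in>S. f z x = z \<and> f x z = z)"

definition annih :: "'a set \<Rightarrow> ('a \<Rightarrow> 'a \<Rightarrow> 'a) \<Rightarrow> 'a \<Rightarrow> 'a \<Rightarrow> 'a set" where
  "annih S f z s = {x \<in> S. f x s = z}"

definition is_semigroup :: "'a set \<Rightarrow> ('a \<Rightarrow> 'a \<Rightarrow> 'a) \<Rightarrow> bool" where
  "is_semigroup S f \<longleftrightarrow> (\<forall>x\<in>S. \<forall>y\<in>S. f x y \<in> S) \<and>
     (\<forall>x\<in>S. \<forall>y\<in>S. \<forall>z\<in>S. f (f x y) z = f x (f y z))"

definition condition_star :: "'a set \<Rightarrow> ('a \<Rightarrow> 'a \<Rightarrow> 'a) \<Rightarrow> bool" where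
  "condition_star S f \<longleftrightarrow>
     is_semigroup S f \<and> (\<forall>x\<in>S. \<forall>y\<in>S. f x y = f y x) \<and>
     (\<exists>e z. is_identity S f e \<and> is_zero S f z \<and>
        (\<forall>s\<in>S. s \<noteq> e \<longrightarrow> annih S f z s \<noteq> {z}) \<and>
        (\<forall>s\<in>S. \<forall>t\<in>S. annih S f z s = annih S f z t \<longrightarrow> s = t))"

definition assoc_rel :: "('a::factorial_ring_gcd \<times> 'a) set" where
  "assoc_rel = {(a, b). a dvd b \<and> b dvd a}"

definition assoc_class :: "'a::factorial_ring_gcd \<Rightarrow> 'a set" where
  "assoc_class x = assoc_rel `` {x}"

definition D' :: "'a::factorial_ring_gcd set set" where
  "D' = UNIV // assoc_rel"

definition mult' :: "'a::factorial_ring_gcd set \<Rightarrow> 'a set \<Rightarrow> 'a set" where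
  "mult' = class_op assoc_rel (*)"

definition gcd' :: "'a::factorial_ring_gcd set \<Rightarrow> 'a set \<Rightarrow> 'a set" where
  "gcd' = class_op assoc_rel gcd"

definition tau' :: "'a::factorial_ring_gcd set \<Rightarrow> ('a set \<times> 'a set) set" where
  "tau' M = {(A, B). A \<in> D' \<and> B \<in> D' \<and> gcd' A M = gcd' B M}"

end

theory Submission imports Defs begin

text \<open>For \<open>m \<noteq> 0\<close> write \<open>m = gcd a m * c\<close>; then \<open>m dvd c * x\<close> holds iff \<open>gcd a m dvd x\<close>.
  Hence \<open>gcd a m = gcd b m\<close> iff \<open>m dvd c * a \<longleftrightarrow> m dvd c * b\<close> for all \<open>c\<close>. The right-hand
  side says both that \<open>[a]\<close> and \<open>[b]\<close> have the same two-sided residuals in the principal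
  ideal generated by \<open>[m]\<close>, and that their \<open>\<tau>'\<close>-classes have the same annihilator (the zero
  of the quotient being the class of the multiples of \<open>m\<close>). The quotient is a well-defined
  monoid because \<open>gcd (a * b) m\<close> only depends on \<open>gcd a m\<close> and \<open>b\<close>. If \<open>gcd a m\<close> is not a
  unit, the cofactor \<open>c\<close> above is a nonzero annihilator of the class of \<open>a\<close>.\<close>

lemma mem_assoc_class_iff: "y \<in> assoc_class x \<longleftrightarrow> normalize y = normalize x"
  by (auto simp: assoc_class_def assoc_rel_def associated_iff_dvd)

lemma assoc_class_eq_iff: "assoc_class a = assoc_class b \<longleftrightarrow> normalize a = normalize b"
  by (auto simp: mem_assoc_class_iff set_eq_iff)

lemma D'_eq_range: "D' = range assoc_class"
  by (auto simp: D'_def quotient_def assoc_class_def)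

lemma assoc_class_in_D': "assoc_class x \<in> D'"
  by (simp add: D'_eq_range)

lemma rel_on_D'_eqI:
  assumes "R \<subseteq> D' \<times> D'" "S \<subseteq> D' \<times> D'"
    and "\<And>a b. (assoc_class a, assoc_class b) \<in> R \<longleftrightarrow> (assoc_class a, assoc_class b) \<in> S"
  shows "R = S"
  using assms unfolding D'_eq_range by blast

lemma class_op_assoc_class:
  assumes "\<And>a a' b b'. normalize a = normalize a' \<Longrightarrow> normalize b = normalize b' \<Longrightarrow>
      normalize (f a b) = normalize (f a' b')"
  shows "class_op assoc_rel f (assoc_class a) (assoc_class b) = assoc_class (f a b)"
proof -
  have "assoc_rel `` {f a' b'} = assoc_class (f a b)"
    if "a' \<in> assoc_class a" "b' \<in> assoc_class b" for a' b'
  proof -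
    have "normalize (f a' b') = normalize (f a b)"
      using that by (intro assms) (simp_all add: mem_assoc_class_iff)
    then show ?thesis
      unfolding assoc_class_def[symmetric] assoc_class_eq_iff .
  qed
  moreover have "a \<in> assoc_class a" "b \<in> assoc_class b"
    by (simp_all add: mem_assoc_class_iff)
  ultimately show ?thesis
    unfolding class_op_def by blast
qed

lemma mult'_assoc_class: "mult' (assoc_class a) (assoc_class b) = assoc_class (a * b)"
  unfolding mult'_def
  by (rule class_op_assoc_class) (metis normalize_mult_normalize_left normalize_mult_normalize_right)

lemma gcd'_assoc_class: "gcd' (assoc_class a) (assoc_class b) = assoc_class (gcd a b)"
  unfolding gcd'_def
  by (rule class_op_assoc_class) (metis gcd.normalize_left_idem gcd.normalize_right_idem)

lemma gcd_gcd_mult_left: "gcd (gcd a m * b) m = gcd (a * b) (m :: 'a :: factorial_ring_gcd)"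
proof -
  have "gcd (gcd a m * b) m = gcd (gcd (a * b) (m * b)) m"
    by (metis gcd.normalize_left_idem gcd_mult_right gcd.commute)
  also have "\<dots> = gcd (a * b) (gcd (m * b) m)"
    by (rule gcd.assoc)
  also have "gcd (m * b) m = normalize m"
    by (simp add: gcd_proj2_iff)
  finally show ?thesis
    by simp
qed

lemma gcd_mult_cong:
  fixes m :: "'a :: factorial_ring_gcd"
  assumes "gcd a m = gcd a' m" "gcd b m = gcd b' m"
  shows "gcd (a * b) m = gcd (a' * b') m"
  by (metis assms gcd_gcd_mult_left mult.commute)

lemma dvd_mult_cofactor_iff:
  fixes m d c x :: "'a :: idom"
  assumes "m \<noteq> 0" "m = d * c"
  shows "m dvd c * x \<longleftrightarrow> d dvd x"
  using assms by (simp add: mult.commute)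

lemma gcd_eq_iff_dvd_mult_iff:
  fixes m :: "'a :: factorial_ring_gcd"
  assumes "m \<noteq> 0"
  shows "gcd a m = gcd b m \<longleftrightarrow> (\<forall>c. m dvd c * a \<longleftrightarrow> m dvd c * b)"
proof
  assume "gcd a m = gcd b m"
  then have "gcd (c * a) m = gcd (c * b) m" for c
    by (rule gcd_mult_cong[OF refl])
  then show "\<forall>c. m dvd c * a \<longleftrightarrow> m dvd c * b"
    by (simp flip: gcd_proj2_iff)
next
  have gcd_dvd_gcd: "gcd x m dvd gcd y m" if "\<forall>c. m dvd c * x \<longrightarrow> m dvd c * y" for x y
  proof -
    obtain c where c: "m = gcd x m * c"
      by (metis dvdE gcd_dvd2)
    have "m dvd c * x"
      using dvd_mult_cofactor_iff[OF assms c] by simp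
    then have "m dvd c * y"
      using that by blast
    then show ?thesis
      using dvd_mult_cofactor_iff[OF assms c] by simp
  qed
  assume "\<forall>c. m dvd c * a \<longleftrightarrow> m dvd c * b"
  then have "gcd a m dvd gcd b m" "gcd b m dvd gcd a m"
    by (blast intro: gcd_dvd_gcd)+
  then show "gcd a m = gcd b m"
    by (simp add: associated_eqI)
qed

lemma tau'_assoc_class_iff:
  "(assoc_class a, assoc_class b) \<in> tau' (assoc_class m) \<longleftrightarrow> gcd a m = gcd b m"
  by (simp add: tau'_def assoc_class_in_D' gcd'_assoc_class assoc_class_eq_iff)

lemma equiv_tau': "equiv D' (tau' M)"
  unfolding equiv_def refl_on_def sym_def trans_def tau'_def by auto

definition tau'_class :: "'a::factorial_ring_gcd \<Rightarrow> 'a \<Rightarrow> 'a set set" where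
  "tau'_class m a = tau' (assoc_class m) `` {assoc_class a}"

lemma tau'_class_eq_iff: "tau'_class m a = tau'_class m b \<longleftrightarrow> gcd a m = gcd b m"
  unfolding tau'_class_def eq_equiv_class_iff[OF equiv_tau' assoc_class_in_D' assoc_class_in_D']
  by (rule tau'_assoc_class_iff)

lemma quotient_tau'_eq_range: "D' // tau' (assoc_class m) = range (tau'_class m)"
  by (auto simp: quotient_def D'_eq_range tau'_class_def)

lemma mem_tau'_class_iff: "X \<in> tau'_class m a \<longleftrightarrow> (\<exists>b. X = assoc_class b \<and> gcd a m = gcd b m)"
  unfolding tau'_class_def using tau'_assoc_class_iff
  by (auto simp: tau'_def D'_eq_range)

lemma class_op_tau'_class:
  "class_op (tau' (assoc_class m)) mult' (tau'_class m a) (tau'_class m b) = tau'_class m (a * b)"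
proof -
  have "tau' (assoc_class m) `` {mult' A B} = tau'_class m (a * b)"
    if AB: "A \<in> tau'_class m a" "B \<in> tau'_class m b" for A B
  proof -
    obtain a' b' where "A = assoc_class a'" "B = assoc_class b'"
      and "gcd a m = gcd a' m" "gcd b m = gcd b' m"
      using AB unfolding mem_tau'_class_iff by blast
    then show ?thesis
      by (simp add: mult'_assoc_class flip: tau'_class_def)
        (metis gcd_mult_cong tau'_class_eq_iff)
  qed
  moreover have "assoc_class a \<in> tau'_class m a" "assoc_class b \<in> tau'_class m b"
    unfolding mem_tau'_class_iff by blast+
  ultimately show ?thesis
    unfolding class_op_def by blast
qed

lemma condition_star_tau'_quotient:
  fixes m :: "'a::factorial_ring_gcd"
  assumes "m \<noteq> 0"
  shows "condition_star (range (tau'_class m)) (class_op (tau' (assoc_class m)) mult')"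
proof -
  let ?Q = "tau'_class m" and ?f = "class_op (tau' (assoc_class m)) mult'"
  let ?A = "annih (range ?Q) ?f (?Q 0)"
  have op: "?f (?Q a) (?Q b) = ?Q (a * b)" for a b
    by (rule class_op_tau'_class)
  have annih_iff: "?Q c \<in> ?A (?Q a) \<longleftrightarrow> m dvd c * a" for a c
    by (simp add: annih_def op tau'_class_eq_iff gcd_proj2_iff)
  have proper: "?A (?Q a) \<noteq> {?Q 0}" if "?Q a \<noteq> ?Q 1" for a
  proof -
    have "\<not> is_unit (gcd a m)"
      using that by (simp add: tau'_class_eq_iff)
    obtain c where c: "m = gcd a m * c"
      by (metis dvdE gcd_dvd2)
    have "?Q c \<in> ?A (?Q a)"
      using annih_iff dvd_mult_cofactor_iff[OF assms c] by simp
    moreover have "?Q c \<noteq> ?Q 0"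
      using \<open>\<not> is_unit (gcd a m)\<close> dvd_mult_cofactor_iff[OF assms c, of 1]
      by (simp add: tau'_class_eq_iff gcd_proj2_iff)
    ultimately show ?thesis
      by blast
  qed
  have injective: "?Q a = ?Q b" if "?A (?Q a) = ?A (?Q b)" for a b
  proof -
    have "\<forall>c. m dvd c * a \<longleftrightarrow> m dvd c * b"
      using that annih_iff by blast
    then show ?thesis
      by (simp add: tau'_class_eq_iff gcd_eq_iff_dvd_mult_iff[OF assms])
  qed
  have "is_semigroup (range ?Q) ?f"
    unfolding is_semigroup_def by (auto simp: op mult.assoc)
  moreover have "\<forall>x\<in>range ?Q. \<forall>y\<in>range ?Q. ?f x y = ?f y x"
    by (auto simp: op mult.commute)
  moreover have "is_identity (range ?Q) ?f (?Q 1)" "is_zero (range ?Q) ?f (?Q 0)"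
    unfolding is_identity_def is_zero_def by (auto simp: op)
  ultimately show ?thesis
    unfolding condition_star_def using proper injective
    by (intro conjI exI[of _ "?Q 1"] exI[of _ "?Q 0"]) auto
qed

lemma gen_ideal_assoc_class: "gen_ideal D' mult' (assoc_class m) = assoc_class ` range ((*) m)"
proof
  have "assoc_class (m * y) \<in> assoc_class ` range ((*) m)" for y
    by (intro imageI rangeI)
  then show "gen_ideal D' mult' (assoc_class m) \<subseteq> assoc_class ` range ((*) m)"
    unfolding gen_ideal_def D'_eq_range
    by (auto simp: mult'_assoc_class)
      (metis mult_1_right, metis mult.commute, metis mult.commute mult.assoc)
  have "assoc_class (m * y) = mult' (assoc_class m) (assoc_class y)" for y
    by (simp add: mult'_assoc_class)
  then show "assoc_class ` range ((*) m) \<subseteq> gen_ideal D' mult' (assoc_class m)"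
    unfolding gen_ideal_def using assoc_class_in_D' by blast
qed

lemma mem_gen_ideal_assoc_class_iff:
  "assoc_class z \<in> gen_ideal D' mult' (assoc_class m) \<longleftrightarrow> m dvd z"
  unfolding gen_ideal_assoc_class
proof
  assume "assoc_class z \<in> assoc_class ` range ((*) m)"
  then obtain k where "assoc_class z = assoc_class (m * k)"
    by blast
  then have "m * k dvd z"
    by (simp add: assoc_class_eq_iff associated_iff_dvd)
  then show "m dvd z"
    by (rule dvd_mult_left)
next
  assume "m dvd z"
  then obtain k where "z = m * k" ..
  then show "assoc_class z \<in> assoc_class ` range ((*) m)"
    by (simp only: imageI rangeI)
qed

lemma dots_subset: "dots S f H a \<subseteq> S \<times> S"
  by (auto simp: dots_def)

lemma dots_assoc_class_iff:
  "(assoc_class x, assoc_class y) \<in> dots D' mult' (gen_ideal D' mult' (assoc_class m)) (assoc_class a)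
    \<longleftrightarrow> m dvd x * a * y"
  by (simp add: dots_def assoc_class_in_D' mult'_assoc_class mem_gen_ideal_assoc_class_iff)

lemma tau'_eq_P_rel:
  fixes m :: "'a::factorial_ring_gcd"
  assumes "m \<noteq> 0"
  shows "tau' (assoc_class m) = P_rel D' mult' (gen_ideal D' mult' (assoc_class m))"
proof (rule rel_on_D'_eqI)
  show "tau' (assoc_class m) \<subseteq> D' \<times> D'"
    and "P_rel D' mult' (gen_ideal D' mult' (assoc_class m)) \<subseteq> D' \<times> D'"
    by (auto simp: tau'_def P_rel_def)
  fix a b
  let ?dots = "dots D' mult' (gen_ideal D' mult' (assoc_class m))"
  have "(assoc_class a, assoc_class b) \<in> tau' (assoc_class m) \<longleftrightarrow> gcd a m = gcd b m"
    by (rule tau'_assoc_class_iff)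
  also have "\<dots> \<longleftrightarrow> (\<forall>c. m dvd c * a \<longleftrightarrow> m dvd c * b)"
    by (rule gcd_eq_iff_dvd_mult_iff[OF assms])
  also have "\<dots> \<longleftrightarrow> (\<forall>x y. m dvd x * a * y \<longleftrightarrow> m dvd x * b * y)"
  proof
    assume H: "\<forall>c. m dvd c * a \<longleftrightarrow> m dvd c * b"
    show "\<forall>x y. m dvd x * a * y \<longleftrightarrow> m dvd x * b * y"
    proof (intro allI)
      fix x y
      show "m dvd x * a * y \<longleftrightarrow> m dvd x * b * y"
        using H[rule_format, of "x * y"] by (simp add: ac_simps)
    qed
  next
    assume "\<forall>x y. m dvd x * a * y \<longleftrightarrow> m dvd x * b * y"
    then show "\<forall>c. m dvd c * a \<longleftrightarrow> m dvd c * b"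
      by (metis mult_1_right)
  qed
  also have "\<dots> \<longleftrightarrow> ?dots (assoc_class a) = ?dots (assoc_class b)"
  proof
    assume "\<forall>x y. m dvd x * a * y \<longleftrightarrow> m dvd x * b * y"
    then show "?dots (assoc_class a) = ?dots (assoc_class b)"
      by (intro rel_on_D'_eqI dots_subset) (simp add: dots_assoc_class_iff)
  next
    assume dots_eq: "?dots (assoc_class a) = ?dots (assoc_class b)"
    show "\<forall>x y. m dvd x * a * y \<longleftrightarrow> m dvd x * b * y"
      using dots_assoc_class_iff[of _ _ m a] dots_assoc_class_iff[of _ _ m b]
      by (simp add: dots_eq)
  qed
  also have "\<dots> \<longleftrightarrow>
      (assoc_class a, assoc_class b) \<in> P_rel D' mult' (gen_ideal D' mult' (assoc_class m))"
    by (simp add: P_rel_def assoc_class_in_D')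
  finally show "(assoc_class a, assoc_class b) \<in> tau' (assoc_class m) \<longleftrightarrow>
      (assoc_class a, assoc_class b) \<in> P_rel D' mult' (gen_ideal D' mult' (assoc_class m))" .
qed

theorem corollary3:
  fixes m :: "'a::factorial_ring_gcd"
  assumes "assoc_class m \<noteq> assoc_class 0"
  shows "tau' (assoc_class m) = P_rel D' mult' (gen_ideal D' mult' (assoc_class m))
    \<and> condition_star (D' // tau' (assoc_class m)) (class_op (tau' (assoc_class m)) mult')"
proof -
  have "m \<noteq> 0"
    using assms by auto
  then show ?thesis
    unfolding quotient_tau'_eq_range
    using tau'_eq_P_rel condition_star_tau'_quotient by blast
qed

end
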